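(* Let $P$ be a special product rule. For every $P$-automaton $\mathcal A=\langle X,F,\Delta\rangle$ and all terms $u,v\in\mathrm{Terms}(X)$ with $u\approx v$, we have $[\![u]\!]_{\mathcal A}=[\![v]\!]_{\mathcal A}$.
   Context: Let $\Sigma$ be a finite alphabet, $\Sigma^*$ its finite words with empty word $\varepsilon$. A series is $f:\Sigma^*\to\mathbb Q$; $\delta_af$ ($a\in\Sigma$) is $w\mapsto f(aw)$. Terms: $\mathrm{Terms}(X)$ generated by $u,v::=x\mid 0\mid c\cdot u\mid u+v\mid u*v$ ($c\in\mathbb Q$). A product rule is a term $P$ over $\{x,\dot x,y,\dot y\}$; $P(s_1,\dots,s_4)$ denotes substitution. $u\approx v$ iff $u,v$ denote the same polynomial in $\mathbb Q[X]$ (constructors read as polynomial operations). $P$ is special if $P(x+y,\dot x+\dot y,z,\dot z)\approx P(x,\dot x,z,\dot z)+P(y,\dot y,z,\dot z)$, $P(x,\dot x,y*z,P(y,\dot y,z,\dot z))\approx P(x*y,P(x,\dot x,y,\dot y),z,\dot z)$, $P(x,\dot x,y,\dot y)\approx P(y,\dot y,x,\dot x)$. $P$-automaton: $\mathcal A=\langle X,F,\Delta\rangle$ with $F:X\to\mathbb Q$, $\Delta_a:X\to\mathrm{Terms}(X)$ for $a\in\Sigma$. The $P$-extension $\tilde D$ of $D:X\to\mathrm{Terms}(X)$ is $\tilde D0=0$, $\tilde Dx=Dx$, $\tilde D(c\alpha)=c\tilde D\alpha$, $\tilde D(\alpha+\beta)=\tilde D\alpha+\tilde D\beta$, $\tilde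 D(\alpha*\beta)=P(\alpha,\tilde D\alpha,\beta,\tilde D\beta)$. $F$ is extended to terms by evaluation in $\mathbb Q$. $[\![\alpha]\!]_{\mathcal A}$ is the unique series with $([\![\alpha]\!]_{\mathcal A})_\varepsilon=F(\alpha)$ and $\delta_a[\![\alpha]\!]_{\mathcal A}=[\![\tilde\Delta_a\alpha]\!]_{\mathcal A}$ for all $a$ (equivalently $[\![\alpha]\!]_{\mathcal A}(a_1\cdots a_n)=F(\tilde\Delta_{a_n}\cdots\tilde\Delta_{a_1}\alpha)$). *)

theory Defs
  imports Complex_Main "HOL-Library.Poly_Mapping"
begin

datatype 'v trm = Var 'v | Zero | Scal rat "'v trm" | Plus "'v trm" "'v trm" | Times "'v trm" "'v trm"

fun subst :: "('v \<Rightarrow> 'w trm) \<Rightarrow> 'v trm \<Rightarrow> 'w trm" where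
  "subst s (Var x) = s x"
| "subst s Zero = Zero"
| "subst s (Scal c u) = Scal c (subst s u)"
| "subst s (Plus u v) = Plus (subst s u) (subst s v)"
| "subst s (Times u v) = Times (subst s u) (subst s v)"

(* Q[X]: polynomials as finitely supported maps from monomials (finitely supported
   exponent vectors X =>0 nat) to rational coefficients, with convolution product *)
type_synonym 'v mpoly = "('v \<Rightarrow>\<^sub>0 nat) \<Rightarrow>\<^sub>0 rat"

fun poly_of :: "'v trm \<Rightarrow> 'v mpoly" where
  "poly_of (Var x) = Poly_Mapping.single (Poly_Mapping.single x 1) 1"
| "poly_of Zero = 0"
| "poly_of (Scal c u) = Poly_Mapping.single 0 c * poly_of u"
| "poly_of (Plus u v) = poly_of u + poly_of v"
| "poly_of (Times u v) = poly_of u * poly_of v"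

definition peq :: "'v trm \<Rightarrow> 'v trm \<Rightarrow> bool" where
  "peq u v \<longleftrightarrow> poly_of u = poly_of v"

datatype pvar = PX | PXd | PY | PYd

definition papp :: "pvar trm \<Rightarrow> 'w trm \<Rightarrow> 'w trm \<Rightarrow> 'w trm \<Rightarrow> 'w trm \<Rightarrow> 'w trm" where
  "papp P s1 s2 s3 s4 = subst (\<lambda>v. case v of PX \<Rightarrow> s1 | PXd \<Rightarrow> s2 | PY \<Rightarrow> s3 | PYd \<Rightarrow> s4) P"

datatype svar = SX | SXd | SY | SYd | SZ | SZd

definition special :: "pvar trm \<Rightarrow> bool" where
  "special P \<longleftrightarrow>
     peq (papp P (Plus (Var SX) (Var SY)) (Plus (Var SXd) (Var SYd)) (Var SZ) (Var SZd))
         (Plus (papp P (Var SX) (Var SXd) (Var SZ) (Var SZd)) (papp P (Var SY) (Var SYd) (Var SZ) (Var SZd)))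
   \<and> peq (papp P (Var SX) (Var SXd) (Times (Var SY) (Var SZ)) (papp P (Var SY) (Var SYd) (Var SZ) (Var SZd)))
         (papp P (Times (Var SX) (Var SY)) (papp P (Var SX) (Var SXd) (Var SY) (Var SYd)) (Var SZ) (Var SZd))
   \<and> peq (papp P (Var SX) (Var SXd) (Var SY) (Var SYd)) (papp P (Var SY) (Var SYd) (Var SX) (Var SXd))"

fun pext :: "pvar trm \<Rightarrow> ('x \<Rightarrow> 'x trm) \<Rightarrow> 'x trm \<Rightarrow> 'x trm" where
  "pext P D (Var x) = D x"
| "pext P D Zero = Zero"
| "pext P D (Scal c u) = Scal c (pext P D u)"
| "pext P D (Plus u v) = Plus (pext P D u) (pext P D v)"
| "pext P D (Times u v) = papp P u (pext P D u) v (pext P D v)"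

fun evalF :: "('x \<Rightarrow> rat) \<Rightarrow> 'x trm \<Rightarrow> rat" where
  "evalF F (Var x) = F x"
| "evalF F Zero = 0"
| "evalF F (Scal c u) = c * evalF F u"
| "evalF F (Plus u v) = evalF F u + evalF F v"
| "evalF F (Times u v) = evalF F u * evalF F v"

(* [[alpha]]_A (a1...an) = F(Delta~_an ... Delta~_a1 alpha); the automaton is <X,F,Delta>
   with X the variable type 'x *)
definition sem :: "pvar trm \<Rightarrow> ('x \<Rightarrow> rat) \<Rightarrow> ('a \<Rightarrow> 'x \<Rightarrow> 'x trm) \<Rightarrow> 'x trm \<Rightarrow> 'a list \<Rightarrow> rat" where
  "sem P F Delta alpha w = evalF F (fold (\<lambda>a t. pext P (Delta a) t) w alpha)"

end

theory Submission
  imports Defs "HOL-Library.Product_Plus"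
begin

text \<open>
  A term can be evaluated in every commutative, not necessarily unital, \<open>\<rat>\<close>-algebra \<open>A\<close>, and
  the value only depends on the polynomial the term denotes: evaluate that polynomial in the
  unitization \<open>\<rat> \<times> A\<close>. If \<open>P\<close> is special, then \<open>A \<times> A\<close> with the product
  \<open>(a, a') (b, b') = (a b, P(a, a', b, b'))\<close> is again such an algebra: the three identities
  defining specialness are distributivity, associativity and commutativity of this product, and
  \<open>\<rat>\<close>-homogeneity follows from additivity. Evaluating \<open>u\<close> at \<open>x \<mapsto> (x, \<Delta>\<^sub>a x)\<close> in this
  algebra over \<open>\<rat>[X]\<close> yields \<open>(u, pext P \<Delta>\<^sub>a u)\<close>. Hence \<open>pext P \<Delta>\<^sub>a\<close> preserves \<open>\<approx>\<close>, and so
  does every iterate of such derivatives, which are finally evaluated in the algebra \<open>\<rat>\<close>.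
\<close>

lemma additive_rat_homogeneous:
  fixes s :: "rat \<Rightarrow> 'a::ab_group_add \<Rightarrow> 'a" and t :: "rat \<Rightarrow> 'b::ab_group_add \<Rightarrow> 'b"
  assumes "module s" and "module t" and "additive f"
  shows "f (s k x) = t k (f x)"
proof -
  interpret s: module s by fact
  interpret t: module t by fact
  interpret f: additive f by fact
  have nat: "f (s (of_nat n) y) = t (of_nat n) (f y)" for n y
    by (induction n) (simp_all add: s.scale_left_distrib t.scale_left_distrib f.add f.zero)
  have int: "f (s (of_int n) y) = t (of_int n) (f y)" for n y
    by (cases n rule: int_cases2) (simp_all add: f.minus nat)
  obtain n d where q: "quotient_of k = (n, d)"
    by fastforce
  have k: "k = of_int n / of_int d" and d: "d > 0"
    using quotient_of_div[OF q] quotient_of_denom_pos[OF q] by simp_all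
  have "t (of_int d) (f (s k x)) = t (of_int n) (f x)"
    using d by (simp add: int[symmetric] k)
  then have "t (1 / of_int d) (t (of_int d) (f (s k x))) = t (1 / of_int d) (t (of_int n) (f x))"
    by simp
  then show ?thesis
    using d by (simp add: k)
qed

lemma poly_mapping_sum_single:
  "p = (\<Sum>m\<in>Poly_Mapping.keys p. Poly_Mapping.single m (Poly_Mapping.lookup p m))"
  by (rule poly_mapping_eqI) (simp add: lookup_sum lookup_single when_def in_keys_iff)

locale rat_algebra = module sc for sc :: "rat \<Rightarrow> 'r::ab_group_add \<Rightarrow> 'r" +
  fixes mul :: "'r \<Rightarrow> 'r \<Rightarrow> 'r"
  assumes mul_commute: "mul a b = mul b a"
    and mul_assoc: "mul (mul a b) c = mul a (mul b c)"
    and mul_add_left: "mul (a + b) c = mul a c + mul b c"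
    and mul_scale_left: "mul (sc k a) b = sc k (mul a b)"
begin

lemma mul_add_right: "mul a (b + c) = mul a b + mul a c"
  using mul_add_left mul_commute by metis

lemma mul_scale_right: "mul a (sc k b) = sc k (mul a b)"
  using mul_scale_left mul_commute by metis

lemma mul_zero_left [simp]: "mul 0 a = 0"
  using mul_scale_left[of 0 0 a] by simp

lemma mul_zero_right [simp]: "mul a 0 = 0"
  using mul_scale_right[of a 0 0] by simp

lemma mul_sum_left: "mul (sum f S) c = (\<Sum>x\<in>S. mul (f x) c)"
  by (induction S rule: infinite_finite_induct) (simp_all add: mul_add_left)

lemma mul_sum_right: "mul c (sum f S) = (\<Sum>x\<in>S. mul c (f x))"
  by (induction S rule: infinite_finite_induct) (simp_all add: mul_add_right)

primrec trm_eval :: "('v \<Rightarrow> 'r) \<Rightarrow> 'v trm \<Rightarrow> 'r" where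
  "trm_eval \<sigma> (Var x) = \<sigma> x"
| "trm_eval \<sigma> Zero = 0"
| "trm_eval \<sigma> (Scal c u) = sc c (trm_eval \<sigma> u)"
| "trm_eval \<sigma> (Plus u v) = trm_eval \<sigma> u + trm_eval \<sigma> v"
| "trm_eval \<sigma> (Times u v) = mul (trm_eval \<sigma> u) (trm_eval \<sigma> v)"

lemma trm_eval_subst: "trm_eval \<tau> (subst s t) = trm_eval (\<lambda>v. trm_eval \<tau> (s v)) t"
  by (induction t) simp_all

definition prod_rule :: "pvar trm \<Rightarrow> 'r \<Rightarrow> 'r \<Rightarrow> 'r \<Rightarrow> 'r \<Rightarrow> 'r" where
  "prod_rule P a a' b b' = trm_eval (\<lambda>v. case v of PX \<Rightarrow> a | PXd \<Rightarrow> a' | PY \<Rightarrow> b | PYd \<Rightarrow> b') P"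

lemma trm_eval_papp:
  "trm_eval \<tau> (papp P s1 s2 s3 s4) =
    prod_rule P (trm_eval \<tau> s1) (trm_eval \<tau> s2) (trm_eval \<tau> s3) (trm_eval \<tau> s4)"
  unfolding papp_def prod_rule_def trm_eval_subst
  by (rule arg_cong[where f = "\<lambda>\<sigma>. trm_eval \<sigma> P"]) (simp add: fun_eq_iff split: pvar.split)

end

locale unital_rat_algebra = rat_algebra sc mul for sc :: "rat \<Rightarrow> 'r::ab_group_add \<Rightarrow> 'r" and mul +
  fixes one :: 'r
  assumes mul_one_left: "mul one a = a"
begin

lemma mul_one_right: "mul a one = a"
  using mul_one_left mul_commute by metis

sublocale mprod: comm_monoid_set mul one
  by unfold_locales (metis mul_assoc mul_commute mul_one_right)+

definition pow :: "'r \<Rightarrow> nat \<Rightarrow> 'r" where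
  "pow a n = (mul a ^^ n) one"

lemma pow_add: "pow a (m + n) = mul (pow a m) (pow a n)"
  by (induction m) (simp_all add: pow_def mul_assoc mul_one_left)

definition mono_eval :: "('v \<Rightarrow> 'r) \<Rightarrow> ('v \<Rightarrow>\<^sub>0 nat) \<Rightarrow> 'r" where
  "mono_eval \<sigma> m = mprod.F (\<lambda>x. pow (\<sigma> x) (Poly_Mapping.lookup m x)) (Poly_Mapping.keys m)"

lemma mono_eval_superset:
  assumes "finite S" and "Poly_Mapping.keys m \<subseteq> S"
  shows "mono_eval \<sigma> m = mprod.F (\<lambda>x. pow (\<sigma> x) (Poly_Mapping.lookup m x)) S"
  unfolding mono_eval_def
  by (rule mprod.mono_neutral_left) (use assms in \<open>auto simp: in_keys_iff pow_def\<close>)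

lemma mono_eval_zero [simp]: "mono_eval \<sigma> 0 = one"
  by (simp add: mono_eval_def)

lemma mono_eval_single: "mono_eval \<sigma> (Poly_Mapping.single x 1) = \<sigma> x"
  by (simp add: mono_eval_def pow_def mul_one_right)

lemma mono_eval_add: "mono_eval \<sigma> (m + m') = mul (mono_eval \<sigma> m) (mono_eval \<sigma> m')"
proof -
  let ?S = "Poly_Mapping.keys m \<union> Poly_Mapping.keys m'"
  have "mono_eval \<sigma> (m + m') = mprod.F (\<lambda>x. pow (\<sigma> x) (Poly_Mapping.lookup (m + m') x)) ?S"
    by (rule mono_eval_superset) (auto simp: keys_add)
  also have "\<dots> = mprod.F (\<lambda>x. mul (pow (\<sigma> x) (Poly_Mapping.lookup m x))
                                    (pow (\<sigma> x) (Poly_Mapping.lookup m' x))) ?S"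
    by (simp add: lookup_add pow_add)
  also have "\<dots> = mul (mono_eval \<sigma> m) (mono_eval \<sigma> m')"
    by (simp add: mprod.distrib mono_eval_superset[of ?S])
  finally show ?thesis .
qed

definition mpoly_eval :: "('v \<Rightarrow> 'r) \<Rightarrow> 'v mpoly \<Rightarrow> 'r" where
  "mpoly_eval \<sigma> p = (\<Sum>m\<in>Poly_Mapping.keys p. sc (Poly_Mapping.lookup p m) (mono_eval \<sigma> m))"

lemma mpoly_eval_superset:
  assumes "finite S" and "Poly_Mapping.keys p \<subseteq> S"
  shows "mpoly_eval \<sigma> p = (\<Sum>m\<in>S. sc (Poly_Mapping.lookup p m) (mono_eval \<sigma> m))"
  unfolding mpoly_eval_def
  by (rule sum.mono_neutral_left) (use assms in \<open>auto simp: in_keys_iff\<close>)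

lemma mpoly_eval_zero [simp]: "mpoly_eval \<sigma> 0 = 0"
  by (simp add: mpoly_eval_def)

lemma mpoly_eval_single: "mpoly_eval \<sigma> (Poly_Mapping.single m c) = sc c (mono_eval \<sigma> m)"
  by (cases "c = 0") (simp_all add: mpoly_eval_def)

lemma mpoly_eval_add: "mpoly_eval \<sigma> (p + q) = mpoly_eval \<sigma> p + mpoly_eval \<sigma> q"
proof -
  let ?S = "Poly_Mapping.keys p \<union> Poly_Mapping.keys q"
  have "mpoly_eval \<sigma> (p + q) = (\<Sum>m\<in>?S. sc (Poly_Mapping.lookup (p + q) m) (mono_eval \<sigma> m))"
    by (rule mpoly_eval_superset) (auto simp: keys_add)
  also have "\<dots> = mpoly_eval \<sigma> p + mpoly_eval \<sigma> q"
    by (simp add: lookup_add scale_left_distrib sum.distrib mpoly_eval_superset[of ?S])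
  finally show ?thesis .
qed

lemma mpoly_eval_sum: "mpoly_eval \<sigma> (sum f S) = (\<Sum>x\<in>S. mpoly_eval \<sigma> (f x))"
  by (induction S rule: infinite_finite_induct) (simp_all add: mpoly_eval_add)

lemma mpoly_eval_mult: "mpoly_eval \<sigma> (p * q) = mul (mpoly_eval \<sigma> p) (mpoly_eval \<sigma> q)"
proof -
  have "p * q = (\<Sum>m\<in>Poly_Mapping.keys p. \<Sum>m'\<in>Poly_Mapping.keys q.
      Poly_Mapping.single (m + m') (Poly_Mapping.lookup p m * Poly_Mapping.lookup q m'))"
    by (subst poly_mapping_sum_single[of p], subst poly_mapping_sum_single[of q])
       (simp add: sum_distrib_left sum_distrib_right mult_single, rule sum.swap)
  then have "mpoly_eval \<sigma> (p * q) = (\<Sum>m\<in>Poly_Mapping.keys p. \<Sum>m'\<in>Poly_Mapping.keys q.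
      mul (sc (Poly_Mapping.lookup p m) (mono_eval \<sigma> m)) (sc (Poly_Mapping.lookup q m') (mono_eval \<sigma> m')))"
    by (simp add: mpoly_eval_sum mpoly_eval_single mono_eval_add mul_scale_left mul_scale_right
        mult.commute)
  also have "\<dots> = mul (mpoly_eval \<sigma> p) (mpoly_eval \<sigma> q)"
    by (simp add: mpoly_eval_def mul_sum_left mul_sum_right, rule sum.swap)
  finally show ?thesis .
qed

lemma mpoly_eval_poly_of: "mpoly_eval \<sigma> (poly_of u) = trm_eval \<sigma> u"
  by (induction u)
    (simp_all add: mpoly_eval_single mono_eval_single[unfolded One_nat_def] mpoly_eval_add mpoly_eval_mult
      mul_scale_left mul_one_left)

end

context rat_algebra
begin

fun unit_mul :: "rat \<times> 'r \<Rightarrow> rat \<times> 'r \<Rightarrow> rat \<times> 'r" where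
  "unit_mul (k, a) (l, b) = (k * l, sc k b + sc l a + mul a b)"

fun unit_scale :: "rat \<Rightarrow> rat \<times> 'r \<Rightarrow> rat \<times> 'r" where
  "unit_scale c (k, a) = (c * k, sc c a)"

lemma unital_rat_algebra_unitization: "unital_rat_algebra unit_scale unit_mul (1, 0)"
proof unfold_locales
  fix a b c :: "rat \<times> 'r" and k l :: rat
  show "unit_scale k (a + b) = unit_scale k a + unit_scale k b"
    by (cases a; cases b) (simp add: algebra_simps)
  show "unit_scale (k + l) a = unit_scale k a + unit_scale l a"
    by (cases a) (simp add: algebra_simps)
  show "unit_scale k (unit_scale l a) = unit_scale (k * l) a"
    by (cases a) simp
  show "unit_scale 1 a = a"
    by (cases a) simp
  show "unit_mul a b = unit_mul b a"
    by (cases a; cases b) (simp add: mul_commute algebra_simps)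
  show "unit_mul (unit_mul a b) c = unit_mul a (unit_mul b c)"
    by (cases a; cases b; cases c)
      (simp add: mul_add_left mul_add_right mul_scale_left mul_scale_right mul_assoc algebra_simps)
  show "unit_mul (a + b) c = unit_mul a c + unit_mul b c"
    by (cases a; cases b; cases c) (simp add: mul_add_left algebra_simps)
  show "unit_mul (unit_scale k a) b = unit_scale k (unit_mul a b)"
    by (cases a; cases b) (simp add: mul_scale_left algebra_simps)
  show "unit_mul (1, 0) a = a"
    by (cases a) simp
qed

lemma trm_eval_peq:
  assumes "peq u v"
  shows "trm_eval \<sigma> u = trm_eval \<sigma> v"
proof -
  interpret unitization: unital_rat_algebra unit_scale unit_mul "(1, 0)"
    by (rule unital_rat_algebra_unitization)
  have embed: "unitization.trm_eval (\<lambda>x. (0, \<sigma> x)) t = (0, trm_eval \<sigma> t)" for t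
    by (induction t) (simp_all add: zero_prod_def)
  have "unitization.trm_eval (\<lambda>x. (0, \<sigma> x)) u = unitization.trm_eval (\<lambda>x. (0, \<sigma> x)) v"
    using assms unfolding peq_def by (metis unitization.mpoly_eval_poly_of)
  then show ?thesis
    by (simp add: embed)
qed

lemma special_prod_rule:
  assumes "special P"
  shows prod_rule_add_left:
      "prod_rule P (a + b) (a' + b') c c' = prod_rule P a a' c c' + prod_rule P b b' c c'"
    and prod_rule_assoc:
      "prod_rule P a a' (mul b c) (prod_rule P b b' c c') = prod_rule P (mul a b) (prod_rule P a a' b b') c c'"
    and prod_rule_commute:
      "prod_rule P a a' b b' = prod_rule P b b' a a'"
proof -
  define \<tau> where "\<tau> v = (case v of SX \<Rightarrow> a | SXd \<Rightarrow> a' | SY \<Rightarrow> b | SYd \<Rightarrow> b' | SZ \<Rightarrow> c | SZd \<Rightarrow> c')" for v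
  note special = assms[unfolded special_def]
  show "prod_rule P (a + b) (a' + b') c c' = prod_rule P a a' c c' + prod_rule P b b' c c'"
    using trm_eval_peq[OF special[THEN conjunct1], of \<tau>] by (simp add: trm_eval_papp \<tau>_def)
  show "prod_rule P a a' (mul b c) (prod_rule P b b' c c') = prod_rule P (mul a b) (prod_rule P a a' b b') c c'"
    using trm_eval_peq[OF special[THEN conjunct2, THEN conjunct1], of \<tau>]
    by (simp add: trm_eval_papp \<tau>_def)
  show "prod_rule P a a' b b' = prod_rule P b b' a a'"
    using trm_eval_peq[OF special[THEN conjunct2, THEN conjunct2], of \<tau>]
    by (simp add: trm_eval_papp \<tau>_def)
qed

lemma prod_rule_scale_left:
  assumes "special P"
  shows "prod_rule P (sc k a) (sc k a') b b' = sc k (prod_rule P a a' b b')"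
proof -
  have decompose: "prod_rule P x x' b b' = prod_rule P x 0 b b' + prod_rule P 0 x' b b'" for x x'
    using prod_rule_add_left[OF assms, of x 0 0 x'] by simp
  have "module sc"
    by (rule module_axioms)
  moreover have "additive (\<lambda>x. prod_rule P x 0 b b')" and "additive (\<lambda>x'. prod_rule P 0 x' b b')"
    by unfold_locales (metis add.right_neutral prod_rule_add_left[OF assms])+
  ultimately have homogeneous: "prod_rule P (sc k a) 0 b b' = sc k (prod_rule P a 0 b b')"
      "prod_rule P 0 (sc k a') b b' = sc k (prod_rule P 0 a' b b')"
    using additive_rat_homogeneous[of sc sc] by blast+
  have "prod_rule P (sc k a) (sc k a') b b' = prod_rule P (sc k a) 0 b b' + prod_rule P 0 (sc k a') b b'"
    by (rule decompose)
  also have "\<dots> = sc k (prod_rule P a a' b b')"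
    by (simp only: homogeneous decompose[of a a'] scale_right_distrib)
  finally show ?thesis .
qed

text \<open>For the Leibniz rule \<open>P = x y' + x' y\<close> this is the algebra of dual numbers over \<open>A\<close>.\<close>

fun dual_mul :: "pvar trm \<Rightarrow> 'r \<times> 'r \<Rightarrow> 'r \<times> 'r \<Rightarrow> 'r \<times> 'r" where
  "dual_mul P (a, a') (b, b') = (mul a b, prod_rule P a a' b b')"

fun dual_scale :: "rat \<Rightarrow> 'r \<times> 'r \<Rightarrow> 'r \<times> 'r" where
  "dual_scale k (a, a') = (sc k a, sc k a')"

lemma rat_algebra_dual:
  assumes "special P"
  shows "rat_algebra dual_scale (dual_mul P)"
proof unfold_locales
  fix a b c :: "'r \<times> 'r" and k l :: rat
  show "dual_scale k (a + b) = dual_scale k a + dual_scale k b"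
    by (cases a; cases b) (simp add: scale_right_distrib)
  show "dual_scale (k + l) a = dual_scale k a + dual_scale l a"
    by (cases a) (simp add: scale_left_distrib)
  show "dual_scale k (dual_scale l a) = dual_scale (k * l) a"
    by (cases a) simp
  show "dual_scale 1 a = a"
    by (cases a) simp
  show "dual_mul P a b = dual_mul P b a"
    by (cases a; cases b) (simp add: mul_commute prod_rule_commute[OF assms])
  show "dual_mul P (dual_mul P a b) c = dual_mul P a (dual_mul P b c)"
    by (cases a; cases b; cases c) (simp add: mul_assoc prod_rule_assoc[OF assms])
  show "dual_mul P (a + b) c = dual_mul P a c + dual_mul P b c"
    by (cases a; cases b; cases c) (simp add: mul_add_left prod_rule_add_left[OF assms])
  show "dual_mul P (dual_scale k a) b = dual_scale k (dual_mul P a b)"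
    by (cases a; cases b) (simp add: mul_scale_left prod_rule_scale_left[OF assms])
qed

end

interpretation rat_alg: rat_algebra "(*) :: rat \<Rightarrow> rat \<Rightarrow> rat" "(*)"
  by unfold_locales (simp_all add: algebra_simps)

definition mpoly_scale :: "rat \<Rightarrow> 'v mpoly \<Rightarrow> 'v mpoly" where
  "mpoly_scale k p = Poly_Mapping.single 0 k * p"

interpretation mpoly: rat_algebra mpoly_scale "(*) :: 'v mpoly \<Rightarrow> 'v mpoly \<Rightarrow> 'v mpoly"
  by unfold_locales (simp_all add: mpoly_scale_def algebra_simps mult_single single_add)

lemma poly_of_eq_trm_eval:
  "poly_of t = mpoly.trm_eval (\<lambda>x. Poly_Mapping.single (Poly_Mapping.single x 1) 1) t"
  by (induction t) (simp_all add: mpoly_scale_def[symmetric])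

lemma poly_of_papp:
  "poly_of (papp P s1 s2 s3 s4) = mpoly.prod_rule P (poly_of s1) (poly_of s2) (poly_of s3) (poly_of s4)"
  by (simp only: poly_of_eq_trm_eval mpoly.trm_eval_papp)

lemma dual_trm_eval_pext:
  assumes "special P"
  shows "rat_algebra.trm_eval mpoly.dual_scale (mpoly.dual_mul P) (\<lambda>x. (poly_of (Var x), poly_of (D x))) u =
    (poly_of u, poly_of (pext P D u))"
proof -
  interpret dual: rat_algebra mpoly.dual_scale "mpoly.dual_mul P"
    by (rule mpoly.rat_algebra_dual[OF assms])
  show ?thesis
    by (induction u) (simp_all add: mpoly_scale_def[symmetric] poly_of_papp zero_prod_def)
qed

lemma peq_pext:
  assumes "special P" and "peq u v"
  shows "peq (pext P D u) (pext P D v)"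
proof -
  interpret dual: rat_algebra mpoly.dual_scale "mpoly.dual_mul P"
    by (rule mpoly.rat_algebra_dual[OF assms(1)])
  let ?\<sigma> = "\<lambda>x. (poly_of (Var x), poly_of (D x))"
  have "(poly_of u, poly_of (pext P D u)) = dual.trm_eval ?\<sigma> u"
    by (rule dual_trm_eval_pext[OF assms(1), symmetric])
  also have "\<dots> = dual.trm_eval ?\<sigma> v"
    by (rule dual.trm_eval_peq[OF assms(2)])
  also have "\<dots> = (poly_of v, poly_of (pext P D v))"
    by (rule dual_trm_eval_pext[OF assms(1)])
  finally show ?thesis
    by (simp add: peq_def)
qed

lemma peq_fold_pext:
  assumes "special P" and "peq u v"
  shows "peq (fold (\<lambda>a t. pext P (Delta a) t) w u) (fold (\<lambda>a t. pext P (Delta a) t) w v)"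
  using assms(2) by (induction w arbitrary: u v) (simp_all add: peq_pext[OF assms(1)])

lemma evalF_eq_trm_eval: "evalF F u = rat_alg.trm_eval F u"
  by (induction u) simp_all

theorem mainTheorem9:
  fixes P :: "pvar trm"
    and F :: "'x \<Rightarrow> rat"
    and Delta :: "'a::finite \<Rightarrow> 'x \<Rightarrow> 'x trm"
    and u v :: "'x trm"
  assumes "special P"
    and "peq u v"
  shows "sem P F Delta u = sem P F Delta v"
proof
  fix w
  show "sem P F Delta u w = sem P F Delta v w"
    unfolding sem_def evalF_eq_trm_eval
    by (rule rat_alg.trm_eval_peq[OF peq_fold_pext[OF assms]])
qed

end
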